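(* Let $t$ be a term and $\vec x=x_1\dots x_n$ a vector of pairwise distinct program variables. If for every $\vec v\in\mathbb{Z}^n$, $$\vec x(1)=\vec x(2)\wedge\vec x(3)=\vec v\ \vdash\ \mathrm{wp}\,[1:t,2:t,3:t]\,\{\vec x(2)=\vec v\Rightarrow\vec x(1)=\vec x(3)\},$$ then $$\vec x(1)=\vec x(2)\ \vdash\ \mathrm{wp}\,[1:t,\ 2:(t;t)]\,\{\vec x(1)=\vec x(2)\}.$$
   Context: Setting. $\mathrm{Val}=\mathbb{Z}$; $\mathrm{PVar}$ is a countably infinite set of program variables; a store is a function $s:\mathrm{PVar}\to\mathrm{Val}$; indices are $\mathrm{Idx}=\mathbb{N}$. Terms of a first-order imperative language are generated by $t ::= v \mid x \mid * \mid t\oplus t \mid \mathtt{skip}\mid x:=t \mid t;t \mid \mathtt{if}\ t\ \mathtt{then}\ t\ \mathtt{else}\ t \mid \mathtt{while}\ t\ \mathtt{do}\ t$, with a nondeterministic big-step semantics $t,s\Downarrow v,s'$ ($t$ run from $s$ may terminate with return value $v$ and final store $s'$; $t_1;t_2,s\Downarrow v,s''$ iff $t_1,s\Downarrow\_,s'$ and $t_2,s'\Downarrow \_,s''$ for some $s'$). A hyper-term is a finitely supported partial map from $\mathrm{Idx}$ to terms, written $[i_1:t_1,\dots,i_n:t_n]$; a hyper-store is a total function $\mathbf s:\mathrm{Idx}\to\mathrm{Store}$. $\mathbf t,\mathbf s\Downarrow\mathbf v,\mathbf s'$ holds iff for every $i\in\mathrm{supp}(\mathbf t)$, $\mathbf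 t(i),\mathbf s(i)\Downarrow\mathbf v(i),\mathbf s'(i)$, and for every $i\notin\mathrm{supp}(\mathbf t)$, $\mathbf s'(i)=\mathbf s(i)$. A hyper-assertion is a predicate on hyper-stores; connectives are pointwise; $P\vdash R$ means $\forall\mathbf s.\ P(\mathbf s)\Rightarrow R(\mathbf s)$. $\mathrm{wp}\,\mathbf t\,\{Q\}(\mathbf s):\iff\forall\mathbf v,\mathbf s'.\ (\mathbf t,\mathbf s\Downarrow\mathbf v,\mathbf s')\Rightarrow Q(\mathbf s')$ for a hyper-assertion $Q$. $\vec x(i)=\vec v$ is the hyper-assertion $\forall k.\ \mathbf s(i)(x_k)=v_k$, and $\vec x(i)=\vec x(j)$ is $\forall k.\ \mathbf s(i)(x_k)=\mathbf s(j)(x_k)$. *)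

theory Defs
  imports Main
begin

type_synonym val = int
type_synonym pvar = nat
type_synonym store = "pvar \<Rightarrow> val"
type_synonym idx = nat

datatype tm =
    Val val
  | Var pvar
  | Any
  | BinOp "val \<Rightarrow> val \<Rightarrow> val" tm tm
  | Skip
  | Assign pvar tm
  | Seq tm tm
  | If tm tm tm
  | While tm tm

(* big-step semantics  t, s \<Down> v, s'  ; a value is "true" iff it is nonzero *)
inductive big :: "tm \<Rightarrow> store \<Rightarrow> val \<Rightarrow> store \<Rightarrow> bool" where
  BVal: "big (Val v) s v s"
| BVar: "big (Var x) s (s x) s"
| BAny: "big Any s v s"
| BOp: "big t1 s v1 s1 \<Longrightarrow> big t2 s1 v2 s2 \<Longrightarrow> big (BinOp f t1 t2) s (f v1 v2) s2"
| BSkip: "big Skip s 0 s"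
| BAssign: "big t s v s1 \<Longrightarrow> big (Assign x t) s v (s1(x := v))"
| BSeq: "big t1 s v1 s1 \<Longrightarrow> big t2 s1 v2 s2 \<Longrightarrow> big (Seq t1 t2) s v2 s2"
| BIfT: "big c s b s1 \<Longrightarrow> b \<noteq> 0 \<Longrightarrow> big t1 s1 v s2 \<Longrightarrow> big (If c t1 t2) s v s2"
| BIfF: "big c s 0 s1 \<Longrightarrow> big t2 s1 v s2 \<Longrightarrow> big (If c t1 t2) s v s2"
| BWhileF: "big c s 0 s1 \<Longrightarrow> big (While c b) s 0 s1"
| BWhileT: "big c s bv s1 \<Longrightarrow> bv \<noteq> 0 \<Longrightarrow> big b s1 v1 s2 \<Longrightarrow> big (While c b) s2 v s3
             \<Longrightarrow> big (While c b) s v s3"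

(* hyper-terms: finitely supported partial maps Idx \<rightharpoonup> tm; hyper-stores: Idx \<Rightarrow> store *)
type_synonym hterm = "idx \<rightharpoonup> tm"
type_synonym hstore = "idx \<Rightarrow> store"
type_synonym hassn = "hstore \<Rightarrow> bool"

definition hbig :: "hterm \<Rightarrow> hstore \<Rightarrow> (idx \<Rightarrow> val) \<Rightarrow> hstore \<Rightarrow> bool" where
  "hbig tt ss vv ss' \<longleftrightarrow>
     (\<forall>i t. tt i = Some t \<longrightarrow> big t (ss i) (vv i) (ss' i)) \<and>
     (\<forall>i. tt i = None \<longrightarrow> ss' i = ss i)"

definition wp :: "hterm \<Rightarrow> hassn \<Rightarrow> hassn" where
  "wp tt Q ss \<longleftrightarrow> (\<forall>vv ss'. hbig tt ss vv ss' \<longrightarrow> Q ss')"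

definition entails :: "hassn \<Rightarrow> hassn \<Rightarrow> bool" (infix "\<turnstile>\<^sub>h" 50) where
  "P \<turnstile>\<^sub>h R \<longleftrightarrow> (\<forall>ss. P ss \<longrightarrow> R ss)"

definition vars_eq_val :: "pvar list \<Rightarrow> idx \<Rightarrow> val list \<Rightarrow> hassn" where
  "vars_eq_val xs i vs ss \<longleftrightarrow> (\<forall>k < length xs. ss i (xs ! k) = vs ! k)"

definition vars_eq :: "pvar list \<Rightarrow> idx \<Rightarrow> idx \<Rightarrow> hassn" where
  "vars_eq xs i j ss \<longleftrightarrow> (\<forall>k < length xs. ss i (xs ! k) = ss j (xs ! k))"

end

theory Submission
  imports Defs
begin

text \<open>Split the second copy's run of \<open>t;t\<close> at its intermediate store \<open>m\<close>, and start a third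
  copy of \<open>t\<close> from \<open>m\<close>, so that it replays the second half. Copies 1 and 2 start equal on
  \<open>x\<close>, copy 3 starts at \<open>x = m(x)\<close> and copy 2 ends there, so the hypothesis makes copy 1 end
  where copy 3 ends, which is the final store of \<open>t;t\<close>.\<close>

inductive_cases big_SeqE: "big (Seq t1 t2) s v s'"

lemma hbig_empty: "hbig Map.empty ss vv ss"
  by (simp add: hbig_def)

lemma hbig_fun_updI:
  assumes "hbig tt ss vv ss'" and "big t (ss i) v s"
  shows "hbig (tt(i \<mapsto> t)) ss (vv(i := v)) (ss'(i := s))"
  using assms by (auto simp: hbig_def)

lemma hbig_component:
  assumes "hbig tt ss vv ss'" and "tt i = Some t"
  shows "big t (ss i) (vv i) (ss' i)"
  using assms by (simp add: hbig_def)

lemma entails_wpD: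
  assumes "P \<turnstile>\<^sub>h wp tt Q" and "P ss" and "hbig tt ss vv ss'"
  shows "Q ss'"
  using assms by (auto simp: entails_def wp_def)

lemma vars_eq_val_map_iff: "vars_eq_val xs i (map s xs) ss \<longleftrightarrow> (\<forall>x \<in> set xs. ss i x = s x)"
  unfolding vars_eq_val_def by (metis in_set_conv_nth length_map nth_map)

lemma vars_eq_iff: "vars_eq xs i j ss \<longleftrightarrow> (\<forall>x \<in> set xs. ss i x = ss j x)"
  unfolding vars_eq_def by (metis in_set_conv_nth)

theorem mainTheorem18:
  fixes t :: tm and xs :: "pvar list"
  assumes "distinct xs"
    and "\<And>vs. length vs = length xs \<Longrightarrow>
           (\<lambda>ss. vars_eq xs 1 2 ss \<and> vars_eq_val xs 3 vs ss)
             \<turnstile>\<^sub>h wp [1 \<mapsto> t, 2 \<mapsto> t, 3 \<mapsto> t]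
                  (\<lambda>ss. vars_eq_val xs 2 vs ss \<longrightarrow> vars_eq xs 1 3 ss)"
  shows "vars_eq xs 1 2 \<turnstile>\<^sub>h wp [1 \<mapsto> t, 2 \<mapsto> Seq t t] (vars_eq xs 1 2)"
  unfolding entails_def wp_def
proof (intro allI impI)
  fix ss vv ss'
  assume pre: "vars_eq xs 1 2 ss" and run: "hbig [1 \<mapsto> t, 2 \<mapsto> Seq t t] ss vv ss'"
  have run1: "big t (ss 1) (vv 1) (ss' 1)" using hbig_component[OF run] by simp
  obtain v m where run2: "big t (ss 2) v m" and run2': "big t m (vv 2) (ss' 2)"
    using hbig_component[OF run, of 2] by (auto elim: big_SeqE)
  let ?initial = "ss(3 := m)" and ?final = "ss(3 := m, 1 := ss' 1, 2 := m, 3 := ss' 2)"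
  have run3: "hbig [1 \<mapsto> t, 2 \<mapsto> t, 3 \<mapsto> t] ?initial (vv(1 := vv 1, 2 := v, 3 := vv 2)) ?final"
    using run1 run2 run2' by (intro hbig_fun_updI hbig_empty) simp_all
  have "vars_eq xs 1 2 ?initial \<and> vars_eq_val xs 3 (map m xs) ?initial"
    using pre by (simp add: vars_eq_iff vars_eq_val_map_iff)
  then have "vars_eq_val xs 2 (map m xs) ?final \<longrightarrow> vars_eq xs 1 3 ?final"
    by (rule entails_wpD[OF assms(2)[of "map m xs", OF length_map] _ run3])
  then show "vars_eq xs 1 2 ss'"
    by (simp add: vars_eq_iff vars_eq_val_map_iff)
qed

end
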